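(* For $0<m<2$, the element $\hat D_W+m\gamma$ of the C*-algebra $C^*\Pi\otimes\End(S)$ is invertible.
   Context: $d$ is a positive even integer, $\Pi\cong\mathbb{Z}^d$ with generators $t_1,\dots,t_d$, $C^*\Pi\cong C(\hat\Pi)$ its group C*-algebra (with $\hat\Pi=\Hom(\Pi,\mathbb{T})$ and $t\in\Pi$ viewed as the function $\chi\mapsto\chi(t)$). $S$ is the irreducible $\mathbb{Z}_2$-graded representation (grading $\gamma$) of the complex Clifford algebra generated by $c(v_1),\dots,c(v_d)$ with $c(v_j)c(v_l)+c(v_l)c(v_j)=-2\delta_{jl}$, $c(v_j)^*=-c(v_j)$. Set $\hat U_j=t_j$, $\hat\nabla_j=\hat U_j-1$, $\hat D=\sum_j c(v_j)(\hat\nabla_j-\hat\nabla_j^* )/2$, $\hat W=\sum_j(\hat\nabla_j+\hat\nabla_j^* )/2$, $\hat D_W=\hat D+\gamma\hat W$. *)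

theory Defs
  imports "HOL-Analysis.Analysis"
begin

text \<open>The C*-algebra C*Pi (x) End(S) is identified (via C*Pi = C(hat Pi)) with the algebra
  of continuous End(S)-valued functions on hat Pi = Hom(Z^d, T) = T^d; a character chi
  is encoded by the tuple z j = chi(t_j) (j < d), padded with 0 for j >= d.\<close>

definition adjm :: "complex^'n^'m \<Rightarrow> complex^'m^'n" where
  "adjm A = (\<chi> i j. cnj (A $ j $ i))"

definition csm :: "complex \<Rightarrow> complex^'n^'m \<Rightarrow> complex^'n^'m" where
  "csm a A = (\<chi> i j. a * A $ i $ j)"

definition graded_clifford_rep :: "nat \<Rightarrow> (nat \<Rightarrow> complex^'n^'n) \<Rightarrow> complex^'n^'n \<Rightarrow> bool" where
  "graded_clifford_rep d c g \<longleftrightarrow>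
     (\<forall>j<d. \<forall>l<d. c j ** c l + c l ** c j = csm (if j = l then -2 else 0) (mat 1)) \<and>
     (\<forall>j<d. adjm (c j) = - c j) \<and>
     g ** g = mat 1 \<and> adjm g = g \<and>
     (\<forall>j<d. c j ** g = - (g ** c j))"

definition graded_irreducible :: "nat \<Rightarrow> (nat \<Rightarrow> complex^'n^'n) \<Rightarrow> complex^'n^'n \<Rightarrow> bool" where
  "graded_irreducible d c g \<longleftrightarrow>
     (\<forall>V :: (complex^'n) set.
        (0 \<in> V \<and> (\<forall>v\<in>V. \<forall>w\<in>V. v + w \<in> V) \<and> (\<forall>a. \<forall>v\<in>V. (\<chi> i. a * v $ i) \<in> V) \<and>
         (\<forall>j<d. \<forall>v\<in>V. c j *v v \<in> V) \<and> (\<forall>v\<in>V. g *v v \<in> V))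
        \<longrightarrow> V = {0} \<or> V = UNIV)"

definition torus :: "nat \<Rightarrow> (nat \<Rightarrow> complex) set" where
  "torus d = {z. (\<forall>j<d. cmod (z j) = 1) \<and> (\<forall>j\<ge>d. z j = 0)}"

definition Uhat :: "nat \<Rightarrow> (nat \<Rightarrow> complex) \<Rightarrow> complex" where
  "Uhat j z = z j"

definition nablahat :: "nat \<Rightarrow> (nat \<Rightarrow> complex) \<Rightarrow> complex" where
  "nablahat j z = Uhat j z - 1"

definition Dhat :: "nat \<Rightarrow> (nat \<Rightarrow> complex^'n^'n) \<Rightarrow> (nat \<Rightarrow> complex) \<Rightarrow> complex^'n^'n" where
  "Dhat d c z = (\<Sum>j<d. csm ((nablahat j z - cnj (nablahat j z)) / 2) (c j))"

definition What :: "nat \<Rightarrow> (nat \<Rightarrow> complex) \<Rightarrow> complex" where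
  "What d z = (\<Sum>j<d. (nablahat j z + cnj (nablahat j z)) / 2)"

definition DWhat :: "nat \<Rightarrow> (nat \<Rightarrow> complex^'n^'n) \<Rightarrow> complex^'n^'n \<Rightarrow> (nat \<Rightarrow> complex) \<Rightarrow> complex^'n^'n" where
  "DWhat d c g z = Dhat d c z + csm (What d z) g"

definition invertible_CT :: "nat \<Rightarrow> ((nat \<Rightarrow> complex) \<Rightarrow> complex^'n^'n::finite) \<Rightarrow> bool" where
  "invertible_CT d A \<longleftrightarrow>
     (\<exists>F. continuous_on (torus d) F \<and>
          (\<forall>z\<in>torus d. F z ** A z = mat 1 \<and> A z ** F z = mat 1))"

end

theory Submission
  imports Defs
begin

text \<open>Write \<open>z\<^sub>j = x\<^sub>j + i y\<^sub>j\<close>. Then \<open>(\<nabla>\<^sub>j - \<nabla>\<^sub>j\<^sup>*)/2 = i y\<^sub>j\<close> and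
  \<open>W + m = \<Sum>\<^sub>j (x\<^sub>j - 1) + m\<close> are scalars, so by the Clifford relations
  \<open>(D\<^sub>W + m\<gamma>)\<^sup>2 = ((\<Sum>\<^sub>j (x\<^sub>j - 1) + m)\<^sup>2 + \<Sum>\<^sub>j y\<^sub>j\<^sup>2) \<cdot> 1\<close>.
  On the torus this scalar vanishes only if every \<open>z\<^sub>j = \<plusminus>1\<close> and \<open>m = 2k\<close>, where \<open>k\<close>
  counts the \<open>z\<^sub>j = -1\<close>; this is excluded by \<open>0 < m < 2\<close>. Hence \<open>D\<^sub>W + m\<gamma>\<close>
  divided by this scalar is a continuous inverse.\<close>

lemma matrix_add_rdistrib: "(B + C) ** A = B ** A + C ** A"
  by (simp add: vec_eq_iff matrix_matrix_mult_def sum.distrib distrib_right)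

lemma csm_mult_left: "csm a A ** B = csm a (A ** B)"
  by (simp add: vec_eq_iff csm_def matrix_matrix_mult_def sum_distrib_left mult.assoc)

lemma csm_mult_right: "A ** csm a B = csm a (A ** B)"
  by (simp add: vec_eq_iff csm_def matrix_matrix_mult_def sum_distrib_left mult.left_commute)

lemma csm_add_right: "csm a (A + B) = csm a A + csm a B"
  by (simp add: vec_eq_iff csm_def algebra_simps)

lemma csm_add_left: "csm (a + b) A = csm a A + csm b A"
  by (simp add: vec_eq_iff csm_def algebra_simps)

lemma csm_csm: "csm a (csm b A) = csm (a * b) A"
  by (simp add: vec_eq_iff csm_def)

lemma csm_1: "csm 1 A = A"
  by (simp add: vec_eq_iff csm_def)

lemma csm_0 [simp]: "csm 0 A = 0" "csm a 0 = 0"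
  by (simp_all add: vec_eq_iff csm_def)

lemma continuous_on_csm:
  "continuous_on S f \<Longrightarrow> continuous_on S A \<Longrightarrow> continuous_on S (\<lambda>z. csm (f z) (A z))"
  unfolding csm_def by (intro continuous_on_vec_lambda continuous_on_mult continuous_on_component)

definition anticommute :: "complex^'n^'n \<Rightarrow> complex^'n^'n \<Rightarrow> bool" where
  "anticommute X Y \<longleftrightarrow> X ** Y + Y ** X = 0"

lemma anticommute_add_csm:
  assumes "anticommute X Z" and "anticommute Y Z"
  shows "anticommute (X + csm a Y) Z"
proof -
  have "(X + csm a Y) ** Z + Z ** (X + csm a Y) = (X ** Z + Z ** X) + csm a (Y ** Z + Z ** Y)"
    by (simp only: matrix_add_rdistrib matrix_add_ldistrib csm_mult_left csm_mult_right
        csm_add_right add.assoc add.left_commute)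
  with assms show ?thesis
    unfolding anticommute_def by simp
qed

lemma anticommute_sum_csm:
  assumes "finite S" and "\<And>j. j \<in> S \<Longrightarrow> anticommute (A j) Z"
  shows "anticommute (\<Sum>j\<in>S. csm (a j) (A j)) Z"
  using assms
proof (induction S rule: finite_induct)
  case empty
  then show ?case by (simp add: anticommute_def)
next
  case (insert j S)
  then show ?case
    by (simp add: add.commute[of "csm (a j) (A j)"] anticommute_add_csm)
qed

lemma square_add_csm:
  "(X + csm a Y) ** (X + csm a Y) = X ** X + csm a (X ** Y + Y ** X) + csm (a * a) (Y ** Y)"
proof -
  have "(X + csm a Y) ** (X + csm a Y) = X ** X + (X ** csm a Y + csm a Y ** X) + csm a Y ** csm a Y"
    by (simp only: matrix_add_rdistrib matrix_add_ldistrib add.assoc add.left_commute)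
  also have "X ** csm a Y + csm a Y ** X = csm a (X ** Y + Y ** X)"
    by (simp only: csm_mult_left csm_mult_right csm_add_right)
  also have "csm a Y ** csm a Y = csm (a * a) (Y ** Y)"
    by (simp only: csm_mult_left csm_mult_right csm_csm)
  finally show ?thesis .
qed

lemma square_add_csm_anticommute:
  "anticommute X Y \<Longrightarrow> (X + csm a Y) ** (X + csm a Y) = X ** X + csm (a * a) (Y ** Y)"
  by (simp add: square_add_csm anticommute_def)

lemma clifford_sum_square:
  fixes n :: nat
  assumes "\<And>j. j < n \<Longrightarrow> c j ** c j = csm (-1) (mat 1)"
    and "\<And>j l. j < n \<Longrightarrow> l < n \<Longrightarrow> j \<noteq> l \<Longrightarrow> anticommute (c j) (c l)"
  shows "(\<Sum>j<n. csm (a j) (c j)) ** (\<Sum>j<n. csm (a j) (c j)) = csm (- (\<Sum>j<n. (a j)\<^sup>2)) (mat 1)"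
  using assms
proof (induction n)
  case 0
  then show ?case by simp
next
  case (Suc n)
  let ?X = "\<Sum>j<n. csm (a j) (c j)"
  have "anticommute ?X (c n)"
    using Suc.prems(2) by (intro anticommute_sum_csm) auto
  then have "(?X + csm (a n) (c n)) ** (?X + csm (a n) (c n)) = ?X ** ?X + csm (a n * a n) (c n ** c n)"
    by (rule square_add_csm_anticommute)
  also have "\<dots> = csm (- (\<Sum>j<Suc n. (a j)\<^sup>2)) (mat 1)"
    using Suc by (simp add: csm_csm power2_eq_square flip: csm_add_left)
  finally show ?case by simp
qed

lemma graded_clifford_repD:
  assumes "graded_clifford_rep d c g"
  shows "\<And>j. j < d \<Longrightarrow> c j ** c j = csm (-1) (mat 1)"
    and "\<And>j l. j < d \<Longrightarrow> l < d \<Longrightarrow> j \<noteq> l \<Longrightarrow> anticommute (c j) (c l)"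
    and "\<And>j. j < d \<Longrightarrow> anticommute (c j) g"
    and "g ** g = mat 1"
proof -
  fix j assume "j < d"
  then have "c j ** c j + c j ** c j = csm (-2) (mat 1)"
    using assms unfolding graded_clifford_rep_def by auto
  then show "c j ** c j = csm (-1) (mat 1)"
    by (simp add: vec_eq_iff csm_def)
qed (use assms in \<open>auto simp: graded_clifford_rep_def anticommute_def\<close>)

lemma graded_clifford_square:
  assumes "graded_clifford_rep d c g"
  shows "((\<Sum>j<d. csm (a j) (c j)) + csm b g) ** ((\<Sum>j<d. csm (a j) (c j)) + csm b g)
    = csm (b\<^sup>2 - (\<Sum>j<d. (a j)\<^sup>2)) (mat 1)"
proof -
  have "anticommute (\<Sum>j<d. csm (a j) (c j)) g"
    using graded_clifford_repD(3)[OF assms] by (intro anticommute_sum_csm) auto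
  then show ?thesis
    using graded_clifford_repD[OF assms]
    by (simp add: square_add_csm_anticommute clifford_sum_square power2_eq_square
        flip: csm_add_left)
qed

definition DWm_square :: "nat \<Rightarrow> real \<Rightarrow> (nat \<Rightarrow> complex) \<Rightarrow> real" where
  "DWm_square d m z = ((\<Sum>j<d. Re (z j) - 1) + m)\<^sup>2 + (\<Sum>j<d. (Im (z j))\<^sup>2)"

lemma DWhat_add_mass_eq:
  "DWhat d c g z + csm (of_real m) g
    = (\<Sum>j<d. csm (\<i> * of_real (Im (z j))) (c j)) + csm (of_real ((\<Sum>j<d. Re (z j) - 1) + m)) g"
proof -
  have "(nablahat j z - cnj (nablahat j z)) / 2 = \<i> * of_real (Im (z j))" for j
    by (simp add: nablahat_def Uhat_def complex_eq_iff)
  moreover have "(nablahat j z + cnj (nablahat j z)) / 2 = of_real (Re (z j) - 1)" for j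
    by (simp add: nablahat_def Uhat_def complex_eq_iff)
  then have "What d z = of_real (\<Sum>j<d. Re (z j) - 1)"
    by (simp only: What_def of_real_sum)
  ultimately show ?thesis
    by (simp add: DWhat_def Dhat_def csm_add_left add.assoc)
qed

lemma DWhat_add_mass_square:
  assumes "graded_clifford_rep d c g"
  shows "(DWhat d c g z + csm (of_real m) g) ** (DWhat d c g z + csm (of_real m) g)
    = csm (of_real (DWm_square d m z)) (mat 1)"
  unfolding DWhat_add_mass_eq graded_clifford_square[OF assms]
  by (simp add: DWm_square_def power_mult_distrib sum_negf)

lemma real_unimodular_cases: "cmod w = 1 \<Longrightarrow> Im w = 0 \<Longrightarrow> Re w = 1 \<or> Re w = -1"
  by (auto simp: cmod_def)

lemma sum_zero_or_neg_two:
  assumes "finite S" and "\<And>j. j \<in> S \<Longrightarrow> x j = 0 \<or> x j = (-2 :: real)"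
  shows "sum x S = -2 * real (card {j\<in>S. x j = -2})"
proof -
  have "sum x S = (\<Sum>j\<in>S. if x j = -2 then -2 else 0)"
    using assms(2) by (intro sum.cong) auto
  also have "\<dots> = -2 * real (card {j\<in>S. x j = -2})"
    using assms(1) by (simp add: sum.If_cases Int_def conj_commute)
  finally show ?thesis .
qed

lemma DWm_square_pos:
  assumes z: "z \<in> torus d" and m: "\<And>k::nat. m \<noteq> 2 * real k"
  shows "DWm_square d m z > 0"
proof (rule ccontr)
  assume "\<not> DWm_square d m z > 0"
  moreover have "0 \<le> (\<Sum>j<d. (Im (z j))\<^sup>2)"
    by (intro sum_nonneg) auto
  ultimately have shift: "(\<Sum>j<d. Re (z j) - 1) + m = 0" and "(\<Sum>j<d. (Im (z j))\<^sup>2) = 0"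
    unfolding DWm_square_def by (smt (verit) zero_le_power2 power_eq_0_iff)+
  then have "Im (z j) = 0" if "j < d" for j
    using that by (simp add: sum_nonneg_eq_0_iff)
  moreover have "cmod (z j) = 1" if "j < d" for j
    using z that by (simp add: torus_def)
  ultimately have "Re (z j) - 1 = 0 \<or> Re (z j) - 1 = -2" if "j < d" for j
    using real_unimodular_cases that by fastforce
  then have "(\<Sum>j<d. Re (z j) - 1) = -2 * real (card {j\<in>{..<d}. Re (z j) - 1 = -2})"
    by (intro sum_zero_or_neg_two) auto
  with shift m show False
    by simp
qed

lemma continuous_on_DWhat: "continuous_on S (DWhat d c g)"
  unfolding DWhat_def Dhat_def What_def nablahat_def Uhat_def
  by (intro continuous_on_add continuous_on_sum continuous_on_csm continuous_on_const
      continuous_on_divide continuous_on_diff continuous_on_cnj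
      continuous_on_subset[OF continuous_on_product_coordinates]) auto

lemma continuous_on_DWm_square: "continuous_on S (DWm_square d m)"
  unfolding DWm_square_def
  by (intro continuous_on_add continuous_on_sum continuous_on_power continuous_on_const
      continuous_on_diff continuous_on_Re continuous_on_Im
      continuous_on_subset[OF continuous_on_product_coordinates]) auto

lemma invertible_CT_if_square_scalar:
  assumes "continuous_on (torus d) A" and "continuous_on (torus d) L"
    and "\<And>z. z \<in> torus d \<Longrightarrow> L z \<noteq> 0"
    and "\<And>z. z \<in> torus d \<Longrightarrow> A z ** A z = csm (L z) (mat 1)"
  shows "invertible_CT d A"
  unfolding invertible_CT_def
proof (intro exI conjI ballI)
  show "continuous_on (torus d) (\<lambda>z. csm (1 / L z) (A z))"
    using assms(1-3) by (intro continuous_on_csm continuous_on_divide continuous_on_const) auto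
next
  fix z assume "z \<in> torus d"
  with assms(3,4) show "csm (1 / L z) (A z) ** A z = mat 1" and "A z ** csm (1 / L z) (A z) = mat 1"
    by (simp_all add: csm_mult_left csm_mult_right csm_csm csm_1)
qed

theorem lemma3p3:
  fixes d :: nat and c :: "nat \<Rightarrow> complex^'n::finite^'n" and g :: "complex^'n^'n" and m :: real
  assumes "d > 0" and "even d"
    and "graded_clifford_rep d c g" and "graded_irreducible d c g"
    and "0 < m" and "m < 2"
  shows "invertible_CT d (\<lambda>z. DWhat d c g z + csm (complex_of_real m) g)"
proof (rule invertible_CT_if_square_scalar)
  show "continuous_on (torus d) (\<lambda>z. DWhat d c g z + csm (complex_of_real m) g)"
    by (intro continuous_on_add continuous_on_DWhat continuous_on_const)
  show "continuous_on (torus d) (\<lambda>z. complex_of_real (DWm_square d m z))"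
    by (intro continuous_on_of_real continuous_on_DWm_square)
  have "m \<noteq> 2 * real k" for k :: nat
    using \<open>0 < m\<close> \<open>m < 2\<close> by (cases k) auto
  then show "complex_of_real (DWm_square d m z) \<noteq> 0" if "z \<in> torus d" for z
    using DWm_square_pos[OF that] by (simp add: order_less_imp_not_eq2)
  show "(DWhat d c g z + csm (complex_of_real m) g) ** (DWhat d c g z + csm (complex_of_real m) g)
      = csm (complex_of_real (DWm_square d m z)) (mat 1)" for z
    by (rule DWhat_add_mass_square[OF \<open>graded_clifford_rep d c g\<close>])
qed

end
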